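(* Let $\mathcal{G}$ be a MAG on vertex set $V$, let $W\subseteq V$ and let $a,b\in W$. Let $C\subseteq W$ and $E\subseteq V\setminus W$ be such that $a,b\notin C$ and $a$ and $b$ are m-separated by $C\cup E$ in $\mathcal{G}$. Then $a$ and $b$ are m-separated by $C$ in the induced subgraph $\mathcal{G}_W$.
   Context: A MAG is an acyclic directed mixed graph (directed and bidirected edges, no directed cycles) with $\mathrm{sib}(v)\cap\mathrm{an}(v)=\emptyset$ for all $v$ and in which every nonadjacent pair of vertices is m-separated by some set. A path is m-connecting given $C$ if every non-endpoint collider (both adjacent edges on the path have an arrowhead at it) lies in $\mathrm{an}(C)$ and every other non-endpoint vertex lies outside $C$; $a$ and $b$ are m-separated by $C$ if there is no m-connecting path between them given $C$. $\mathcal{G}_W$ is the induced subgraph on $W$ (ancestors computed in $\mathcal{G}_W$). *)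

theory Defs
  imports Main
begin

text \<open>Directed mixed graphs: vertex set, directed edges (u,v) meaning u -> v,
  and bidirected edges (stored symmetrically) meaning u <-> v.\<close>
record 'v mgraph =
  verts :: "'v set"
  dedges :: "('v \<times> 'v) set"
  bedges :: "('v \<times> 'v) set"

definition wf_mgraph :: "'v mgraph \<Rightarrow> bool" where
  "wf_mgraph G \<longleftrightarrow> finite (verts G) \<and> dedges G \<subseteq> verts G \<times> verts G
     \<and> bedges G \<subseteq> verts G \<times> verts G \<and> sym (bedges G)"

definition anc :: "'v mgraph \<Rightarrow> 'v set \<Rightarrow> 'v set" where
  "anc G X = {u \<in> verts G. \<exists>x\<in>X. (u, x) \<in> (dedges G)\<^sup>*}"

definition sib :: "'v mgraph \<Rightarrow> 'v \<Rightarrow> 'v set" where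
  "sib G v = {u. (u, v) \<in> bedges G}"

definition adj :: "'v mgraph \<Rightarrow> 'v \<Rightarrow> 'v \<Rightarrow> bool" where
  "adj G u v \<longleftrightarrow> (u, v) \<in> dedges G \<or> (v, u) \<in> dedges G \<or> (u, v) \<in> bedges G"

definition arrowhead_at :: "'v mgraph \<Rightarrow> 'v \<Rightarrow> 'v \<Rightarrow> bool" where
  "arrowhead_at G u v \<longleftrightarrow> (u, v) \<in> dedges G \<or> (u, v) \<in> bedges G"

definition is_path :: "'v mgraph \<Rightarrow> 'v list \<Rightarrow> 'v \<Rightarrow> 'v \<Rightarrow> bool" where
  "is_path G p a b \<longleftrightarrow> p \<noteq> [] \<and> hd p = a \<and> last p = b \<and> distinct p
     \<and> set p \<subseteq> verts G \<and> (\<forall>i. Suc i < length p \<longrightarrow> adj G (p ! i) (p ! Suc i))"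

definition collider :: "'v mgraph \<Rightarrow> 'v list \<Rightarrow> nat \<Rightarrow> bool" where
  "collider G p i \<longleftrightarrow> arrowhead_at G (p ! (i - 1)) (p ! i) \<and> arrowhead_at G (p ! Suc i) (p ! i)"

definition m_connecting :: "'v mgraph \<Rightarrow> 'v list \<Rightarrow> 'v \<Rightarrow> 'v \<Rightarrow> 'v set \<Rightarrow> bool" where
  "m_connecting G p a b C \<longleftrightarrow> is_path G p a b \<and>
     (\<forall>i. 0 < i \<and> Suc i < length p \<longrightarrow>
        (collider G p i \<longrightarrow> p ! i \<in> anc G C) \<and> (\<not> collider G p i \<longrightarrow> p ! i \<notin> C))"

definition m_separated :: "'v mgraph \<Rightarrow> 'v \<Rightarrow> 'v \<Rightarrow> 'v set \<Rightarrow> bool" where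
  "m_separated G a b C \<longleftrightarrow> \<not> (\<exists>p. m_connecting G p a b C)"

definition is_MAG :: "'v mgraph \<Rightarrow> bool" where
  "is_MAG G \<longleftrightarrow> wf_mgraph G
     \<and> (\<forall>v. (v, v) \<notin> (dedges G)\<^sup>+)
     \<and> (\<forall>v \<in> verts G. sib G v \<inter> anc G {v} = {})
     \<and> (\<forall>a \<in> verts G. \<forall>b \<in> verts G. a \<noteq> b \<and> \<not> adj G a b \<longrightarrow>
          (\<exists>C \<subseteq> verts G - {a, b}. m_separated G a b C))"

definition induced :: "'v mgraph \<Rightarrow> 'v set \<Rightarrow> 'v mgraph" where
  "induced G W = \<lparr>verts = W, dedges = dedges G \<inter> (W \<times> W), bedges = bedges G \<inter> (W \<times> W)\<rparr>"

end

theory Submission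
  imports Defs
begin

text \<open>An m-connecting path of \<open>G\<^sub>W\<close> given \<open>C\<close> lies inside \<open>W\<close>, so it avoids \<open>E\<close>; its
  colliders are the same in \<open>G\<close>, and ancestors in \<open>G\<^sub>W\<close> are ancestors in \<open>G\<close>.  Hence it is
  m-connecting in \<open>G\<close> given \<open>C \<union> E\<close>.\<close>

lemma set_path_induced:
  assumes "is_path (induced G W) p a b"
  shows "set p \<subseteq> W"
  using assms unfolding is_path_def induced_def by simp

lemma adj_induced_imp_adj: "adj (induced G W) u v \<Longrightarrow> adj G u v"
  unfolding adj_def induced_def by auto

lemma is_path_induced_imp_is_path:
  assumes "is_path (induced G W) p a b" and "W \<subseteq> verts G"
  shows "is_path G p a b"
  using assms set_path_induced[OF assms(1)] adj_induced_imp_adj[of G W]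
  unfolding is_path_def by blast

lemma arrowhead_at_induced:
  "u \<in> W \<Longrightarrow> v \<in> W \<Longrightarrow> arrowhead_at (induced G W) u v \<longleftrightarrow> arrowhead_at G u v"
  unfolding arrowhead_at_def induced_def by auto

lemma collider_induced:
  assumes "set p \<subseteq> W" and "0 < i" and "Suc i < length p"
  shows "collider (induced G W) p i \<longleftrightarrow> collider G p i"
proof -
  have "p ! (i - 1) \<in> W" "p ! i \<in> W" "p ! Suc i \<in> W"
    using assms by (auto intro!: subsetD[OF assms(1)] nth_mem)
  then show ?thesis
    unfolding collider_def by (simp add: arrowhead_at_induced)
qed

lemma anc_induced_subset:
  assumes "W \<subseteq> verts G"
  shows "anc (induced G W) X \<subseteq> anc G X"
proof
  fix u assume "u \<in> anc (induced G W) X"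
  then obtain x where "x \<in> X" "u \<in> W" and path_W: "(u, x) \<in> (dedges G \<inter> W \<times> W)\<^sup>*"
    unfolding anc_def induced_def by auto
  moreover have "(u, x) \<in> (dedges G)\<^sup>*"
    using path_W by (rule rtrancl_mono[OF Int_lower1, THEN subsetD])
  ultimately show "u \<in> anc G X"
    using assms unfolding anc_def by blast
qed

lemma anc_mono: "X \<subseteq> Y \<Longrightarrow> anc G X \<subseteq> anc G Y"
  unfolding anc_def by blast

lemma m_connecting_induced_imp_m_connecting:
  assumes conn: "m_connecting (induced G W) p a b C"
    and "W \<subseteq> verts G" and "E \<inter> W = {}"
  shows "m_connecting G p a b (C \<union> E)"
proof -
  have path: "is_path (induced G W) p a b"
    using conn unfolding m_connecting_def by blast
  have pW: "set p \<subseteq> W"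
    using set_path_induced[OF path] .
  have anc_C: "anc (induced G W) C \<subseteq> anc G (C \<union> E)"
    using anc_induced_subset[OF assms(2)] anc_mono[of C "C \<union> E" G] by blast
  have "(collider G p i \<longrightarrow> p ! i \<in> anc G (C \<union> E)) \<and> (\<not> collider G p i \<longrightarrow> p ! i \<notin> C \<union> E)"
    if i: "0 < i" "Suc i < length p" for i
  proof -
    have "p ! i \<in> W"
      using i pW by (auto intro!: subsetD[OF pW] nth_mem)
    moreover have "(collider (induced G W) p i \<longrightarrow> p ! i \<in> anc (induced G W) C)
        \<and> (\<not> collider (induced G W) p i \<longrightarrow> p ! i \<notin> C)"
      using conn i unfolding m_connecting_def by blast
    ultimately show ?thesis
      using collider_induced[OF pW i] anc_C assms(3) by auto
  qed
  then show ?thesis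
    using is_path_induced_imp_is_path[OF path assms(2)]
    unfolding m_connecting_def by blast
qed

theorem propositionB2:
  fixes G :: "'v mgraph" and W C E :: "'v set" and a b :: 'v
  assumes "is_MAG G"
    and "W \<subseteq> verts G" and "a \<in> W" and "b \<in> W"
    and "C \<subseteq> W" and "E \<subseteq> verts G - W"
    and "a \<notin> C" and "b \<notin> C"
    and "m_separated G a b (C \<union> E)"
  shows "m_separated (induced G W) a b C"
proof -
  have "E \<inter> W = {}"
    using \<open>E \<subseteq> verts G - W\<close> by blast
  then have "m_connecting G p a b (C \<union> E)" if "m_connecting (induced G W) p a b C" for p
    using m_connecting_induced_imp_m_connecting[OF that \<open>W \<subseteq> verts G\<close>] by blast
  then show ?thesis
    using \<open>m_separated G a b (C \<union> E)\<close> unfolding m_separated_def by metis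
qed

end
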